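(* Let $(\gamma,\nu):I\to\mathbb{R}^2\times S^1$ be a Legendre curve with curvature $(\ell,\beta)$, $\gamma=(x,z)$, $\nu=(a,b)$, and $\lambda\neq0$ a constant; for a plane curve $\eta=(X,Z)$ on $I$ write $r[\eta](u,v)=(X(u)\cos v,X(u)\sin v,Z(u)+\lambda v)$. Let $(k_1,k_2):I\to\mathbb{R}^2$ be smooth with $k_1^2+k_2^2=1$ and $-k_1x+k_2b\lambda=0$, let $\tilde t\neq0$, and let $$r[\gamma]^{\tilde t}(u,v)=\big((x+\tilde tk_2a)\cos v+\tilde tk_1\sin v,\ (x+\tilde tk_2a)\sin v-\tilde tk_1\cos v,\ z+\lambda v+\tilde tk_2b\big)$$ (the parallel surface of $r[\gamma]$ along $\mathbf n=(k_2a\cos v+k_1\sin v,k_2a\sin v-k_1\cos v,k_2b)$). Suppose $A,\theta:I\to\mathbb{R}$ are smooth with $x+\tilde tk_2a=A\cos\theta$, $\tilde tk_1=A\sin\theta$. Let $(\ell_1,\ell_2):I\to\mathbb{R}^2$ be smooth with $\ell_1^2+\ell_2^2=1$ and $\ell_1b\lambda+\ell_2xa=0$, let $t\ne0$, and suppose $B,\tau:I\to\mathbb{R}$ are smooth with $x-t\ell_1=B\cos\tau$, $-t\ell_2=B\sin\tau$. Put $\tilde\gamma(u)=(B(u),z(u)-\lambda\tau(u))$. If $r[\gamma]^{\tilde t}(u,v)=r[\tilde\gamma](u,v)$ for all $(u,v)\in I\times\mathbb{R}$, then $x$ is constant and $\gamma$ is a part of a line.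
   Context: A Legendre curve is a smooth $(\gamma,\nu):I\to\mathbb{R}^2\times S^1$ with $\dot\gamma\cdot\nu=0$; with $\mu=J\nu$ ($J$ anticlockwise rotation by $\pi/2$) its curvature is $(\ell,\beta)$, $\ell=\dot\nu\cdot\mu$, $\beta=\dot\gamma\cdot\mu$, so that $\dot x=-\beta b$, $\dot z=\beta a$, $\dot a=-\ell b$, $\dot b=\ell a$, $a^2+b^2=1$. (Here $B,\tau$ are such that $s+t\nu^s$ is the slice curve of $r[\tilde\gamma]$, where $s=(x\cos\frac z\lambda,-x\sin\frac z\lambda)$ and $\nu^s=(-\ell_2\sin\frac z\lambda-\ell_1\cos\frac z\lambda,-\ell_2\cos\frac z\lambda+\ell_1\sin\frac z\lambda)$.) *)

theory Defs
  imports "HOL-Analysis.Analysis"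
begin

definition smooth_on :: "real set \<Rightarrow> (real \<Rightarrow> real) \<Rightarrow> bool" where
  "smooth_on I f \<longleftrightarrow> (\<forall>n. \<forall>t\<in>I. ((deriv ^^ n) f) differentiable (at t))"

definition legendre_curve ::
  "real set \<Rightarrow> (real \<Rightarrow> real) \<Rightarrow> (real \<Rightarrow> real) \<Rightarrow> (real \<Rightarrow> real) \<Rightarrow> (real \<Rightarrow> real) \<Rightarrow> bool" where
  "legendre_curve I x z a b \<longleftrightarrow>
     smooth_on I x \<and> smooth_on I z \<and> smooth_on I a \<and> smooth_on I b \<and>
     (\<forall>u\<in>I. (a u)\<^sup>2 + (b u)\<^sup>2 = 1) \<and>
     (\<forall>u\<in>I. deriv x u * a u + deriv z u * b u = 0)"

text \<open>Curvature (l, beta) of the Legendre curve, with mu = J nu = (-b, a):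
  l = nu' . mu, beta = gamma' . mu.\<close>
definition leg_curv_l :: "(real \<Rightarrow> real) \<Rightarrow> (real \<Rightarrow> real) \<Rightarrow> real \<Rightarrow> real" where
  "leg_curv_l a b u = - deriv a u * b u + deriv b u * a u"

definition leg_curv_beta ::
  "(real \<Rightarrow> real) \<Rightarrow> (real \<Rightarrow> real) \<Rightarrow> (real \<Rightarrow> real) \<Rightarrow> (real \<Rightarrow> real) \<Rightarrow> real \<Rightarrow> real" where
  "leg_curv_beta x z a b u = - deriv x u * b u + deriv z u * a u"

definition helic_surf ::
  "real \<Rightarrow> (real \<Rightarrow> real) \<Rightarrow> (real \<Rightarrow> real) \<Rightarrow> real \<Rightarrow> real \<Rightarrow> real \<times> real \<times> real" where
  "helic_surf lam X Z u v = (X u * cos v, X u * sin v, Z u + lam * v)"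

definition parallel_surf ::
  "real \<Rightarrow> (real \<Rightarrow> real) \<Rightarrow> (real \<Rightarrow> real) \<Rightarrow> (real \<Rightarrow> real) \<Rightarrow> (real \<Rightarrow> real) \<Rightarrow>
   (real \<Rightarrow> real) \<Rightarrow> (real \<Rightarrow> real) \<Rightarrow> real \<Rightarrow> real \<Rightarrow> real \<Rightarrow> real \<times> real \<times> real" where
  "parallel_surf lam x z a b k1 k2 tt u v =
     ((x u + tt * k2 u * a u) * cos v + tt * k1 u * sin v,
      (x u + tt * k2 u * a u) * sin v - tt * k1 u * cos v,
      z u + lam * v + tt * k2 u * b u)"

end

theory Submission
  imports Defs
begin

text \<open>At v = 0 the helicoidal surface lies in the plane y = 0, whereas the parallel surface has
  y-coordinate -tt k1 there; hence k1 = 0. Then k2 = \<plusminus>1, and the relation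
  -k1 x + k2 b \<lambda> = 0 forces b = 0. So \<nu> = (\<plusminus>1, 0), and the Legendre condition
  x' a + z' b = 0 gives x' = 0: x is constant and \<gamma> runs along a vertical line.\<close>

lemma smooth_on_differentiable:
  assumes "smooth_on I f" "u \<in> I"
  shows "f differentiable (at u)"
  using assms unfolding smooth_on_def by (metis funpow_0)

lemma parallel_surf_eq_helic_surf_imp_k1_eq_0:
  assumes "tt \<noteq> 0"
    and "parallel_surf lam x z a b k1 k2 tt u 0 = helic_surf lam' X Z u 0"
  shows "k1 u = 0"
  using assms by (simp add: parallel_surf_def helic_surf_def)

lemma legendre_curve_deriv_x_eq_0:
  assumes leg: "legendre_curve I x z a b" and u: "u \<in> I" and b: "b u = 0"
  shows "deriv x u = 0"
proof -
  have "(a u)\<^sup>2 = 1" "deriv x u * a u = 0"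
    using leg u b unfolding legendre_curve_def by force+
  then show ?thesis by auto
qed

lemma legendre_curve_x_constant:
  assumes "is_interval I" and leg: "legendre_curve I x z a b" and b: "\<forall>u\<in>I. b u = 0"
  obtains c where "\<forall>u\<in>I. x u = c"
proof -
  have "(x has_field_derivative 0) (at u within I)" if u: "u \<in> I" for u
  proof -
    have "x differentiable (at u)"
      using leg u unfolding legendre_curve_def by (blast intro: smooth_on_differentiable)
    then have "(x has_field_derivative deriv x u) (at u)"
      by (simp add: DERIV_deriv_iff_real_differentiable)
    then show ?thesis
      using legendre_curve_deriv_x_eq_0[OF leg u] b u by (simp add: has_field_derivative_at_within)
  qed
  then show thesis
    using has_field_derivative_zero_constant[OF is_interval_convex[OF \<open>is_interval I\<close>]] that
    by blast
qed

theorem proposition3p6: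
  fixes I :: "real set"
    and x z a b k1 k2 A \<theta> l1 l2 B \<tau> :: "real \<Rightarrow> real"
    and lam tt t :: real
  assumes I: "open I" "is_interval I"
    and leg: "legendre_curve I x z a b"
    and lam: "lam \<noteq> 0"
    and k_smooth: "smooth_on I k1" "smooth_on I k2"
    and k_unit: "\<forall>u\<in>I. (k1 u)\<^sup>2 + (k2 u)\<^sup>2 = 1"
    and k_eq: "\<forall>u\<in>I. - k1 u * x u + k2 u * b u * lam = 0"
    and tt: "tt \<noteq> 0"
    and A_smooth: "smooth_on I A" "smooth_on I \<theta>"
    and A_eq: "\<forall>u\<in>I. x u + tt * k2 u * a u = A u * cos (\<theta> u)"
              "\<forall>u\<in>I. tt * k1 u = A u * sin (\<theta> u)"
    and l_smooth: "smooth_on I l1" "smooth_on I l2"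
    and l_unit: "\<forall>u\<in>I. (l1 u)\<^sup>2 + (l2 u)\<^sup>2 = 1"
    and l_eq: "\<forall>u\<in>I. l1 u * b u * lam + l2 u * x u * a u = 0"
    and t: "t \<noteq> 0"
    and B_smooth: "smooth_on I B" "smooth_on I \<tau>"
    and B_eq: "\<forall>u\<in>I. x u - t * l1 u = B u * cos (\<tau> u)"
              "\<forall>u\<in>I. - t * l2 u = B u * sin (\<tau> u)"
    and surf: "\<forall>u\<in>I. \<forall>v. parallel_surf lam x z a b k1 k2 tt u v
                        = helic_surf lam B (\<lambda>s. z s - lam * \<tau> s) u v"
  shows "(\<exists>c. \<forall>u\<in>I. x u = c) \<and>
         (\<exists>p q :: real \<times> real. q \<noteq> 0 \<and> (\<forall>u\<in>I. \<exists>s. (x u, z u) = p + s *\<^sub>R q))"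
proof -
  have b_eq_0: "b u = 0" if u: "u \<in> I" for u
  proof -
    have k1: "k1 u = 0"
      using surf u tt by (blast intro: parallel_surf_eq_helic_surf_imp_k1_eq_0)
    then have "k2 u \<noteq> 0"
      using k_unit u by force
    moreover have "k2 u * b u * lam = 0"
      using k_eq u k1 by simp
    ultimately show ?thesis
      using lam by simp
  qed
  obtain c where c: "\<forall>u\<in>I. x u = c"
    using legendre_curve_x_constant[OF I(2) leg] b_eq_0 by blast
  have "\<forall>u\<in>I. (x u, z u) = (c, 0) + z u *\<^sub>R (0, 1)"
    using c by simp
  moreover have "(0::real, 1::real) \<noteq> 0"
    by (simp add: zero_prod_def)
  ultimately show ?thesis
    using c by blast
qed

end
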